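(* Let $A$ be a real $m \times N$ matrix and let $h$ be a positive integer. Suppose that for every index set $H \subseteq \{1,\dots,N\}$ with $|H| \le h$, the $m \times |H|$ submatrix $A_H$ formed by the columns of $A$ indexed by $H$ has at least one row containing exactly one nonzero entry. Then every vector $\mathbf{x}\in\mathbb{R}^N$ with at most $k$ nonzero entries, where $k < \frac{h+1}{2}$, is the unique sparsest vector $\tilde{\mathbf{x}}$ satisfying $A\tilde{\mathbf{x}} = A\mathbf{x}$.
   Context: "Sparsest" means having the fewest nonzero entries. *)

theory Defs
  imports "HOL-Analysis.Analysis"
begin

definition nnz :: "real ^ 'n \<Rightarrow> nat" where
  "nnz x = card {j. x $ j \<noteq> 0}"

definition has_singleton_row :: "real ^ 'n ^ 'm \<Rightarrow> 'n set \<Rightarrow> bool" where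
  "has_singleton_row A H \<longleftrightarrow> (\<exists>i. card {j \<in> H. A $ i $ j \<noteq> 0} = 1)"

end

theory Submission
  imports Defs
begin

text \<open>If two distinct vectors with the same image had supports of total size at most \<open>h\<close>,
  their difference \<open>z\<close> would be a nonzero kernel vector whose support \<open>H\<close> has at most \<open>h\<close>
  elements. A row of \<open>A\<close> meeting \<open>H\<close> in exactly one column \<open>j\<close> then gives
  \<open>(A z)\<^sub>i = A\<^sub>i\<^sub>j z\<^sub>j \<noteq> 0\<close>, a contradiction. Since \<open>2k \<le> h\<close>, any competitor with
  at most \<open>nnz x\<close> nonzeros falls into this case.\<close>

definition support :: "real ^ 'n \<Rightarrow> 'n set" where
  "support z = {j. z $ j \<noteq> 0}"

lemma nnz_eq_card_support: "nnz z = card (support z)"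
  by (simp add: nnz_def support_def)

lemma support_eq_empty_iff: "support z = {} \<longleftrightarrow> z = 0"
  by (auto simp: support_def vec_eq_iff)

lemma card_support_diff_le: "card (support (y - x)) \<le> nnz x + nnz y"
proof -
  have "support (y - x) \<subseteq> support x \<union> support y"
    by (auto simp: support_def)
  then have "card (support (y - x)) \<le> card (support x \<union> support y)"
    by (rule card_mono[rotated]) simp
  also have "\<dots> \<le> nnz x + nnz y"
    unfolding nnz_eq_card_support by (rule card_Un_le)
  finally show ?thesis .
qed

lemma matrix_vector_mult_nonzero_if_singleton_row:
  fixes A :: "real ^ 'n ^ 'm" and z :: "real ^ 'n"
  assumes "has_singleton_row A (support z)"
  shows "A *v z \<noteq> 0"
proof -
  obtain i j0 where row: "{j \<in> support z. A $ i $ j \<noteq> 0} = {j0}"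
    using assms by (auto simp: has_singleton_row_def card_Suc_eq)
  have "(A *v z) $ i = (\<Sum>j\<in>UNIV. A $ i $ j * z $ j)"
    by (simp add: matrix_vector_mult_def)
  also have "\<dots> = (\<Sum>j\<in>{j \<in> support z. A $ i $ j \<noteq> 0}. A $ i $ j * z $ j)"
    by (rule sum.mono_neutral_right) (auto simp: support_def)
  also have "\<dots> = A $ i $ j0 * z $ j0"
    using row by simp
  also have "\<dots> \<noteq> 0"
    using row by (auto simp: support_def)
  finally show ?thesis
    by (metis zero_index)
qed

theorem theorem3:
  fixes A :: "real ^ 'n ^ 'm" and h k :: nat and x :: "real ^ 'n"
  assumes "h > 0"
    and "\<And>H. H \<noteq> {} \<Longrightarrow> card H \<le> h \<Longrightarrow> has_singleton_row A H"
    and "nnz x \<le> k"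
    and "real k < (real h + 1) / 2"
  shows "\<forall>y. A *v y = A *v x \<longrightarrow> y \<noteq> x \<longrightarrow> nnz x < nnz y"
proof (intro allI impI, rule ccontr)
  fix y
  assume same_image: "A *v y = A *v x" and "y \<noteq> x" and "\<not> nnz x < nnz y"
  have "real (2 * k) < real h + 1"
    using assms(4) by simp
  then have "2 * k \<le> h"
    by linarith
  then have "card (support (y - x)) \<le> h"
    using card_support_diff_le[of y x] \<open>\<not> nnz x < nnz y\<close> assms(3) by linarith
  moreover have "support (y - x) \<noteq> {}"
    using \<open>y \<noteq> x\<close> by (simp add: support_eq_empty_iff)
  ultimately have "A *v (y - x) \<noteq> 0"
    by (intro matrix_vector_mult_nonzero_if_singleton_row assms(2))
  then show False
    using same_image by (simp add: matrix_vector_mult_diff_distrib)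
qed

end
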